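(* Let $(p_n),(q_n)$ be sequences in $[0,1]$. If $P(n,p_n,q_n)=o(n^{-1})$, then for any $\alpha>0$, $P(\lfloor\alpha n\rfloor,p_n,q_n)\to0$ as $n\to\infty$.
   Context: For integers $m,n\ge0$ and $p,q\in[0,1]$, $P(m,n,p,q)=\Pr(Y\ge X)$ where $X\sim\mathrm{Binom}(m,\max\{p,q\})$ and $Y\sim\mathrm{Binom}(n,\min\{p,q\})$ are independent; $P(n,p,q)=P(n,n,p,q)$. *)

theory Defs
  imports "HOL-Analysis.Analysis" "HOL-Library.Landau_Symbols"
begin

definition binom_pmf :: "nat \<Rightarrow> real \<Rightarrow> nat \<Rightarrow> real" where
  "binom_pmf n p k = real (n choose k) * p ^ k * (1 - p) ^ (n - k)"

text \<open>P(m,n,p,q) = Pr(Y \<ge> X), X ~ Binom(m, max p q), Y ~ Binom(n, min p q) independent.\<close>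
definition Pmn :: "nat \<Rightarrow> nat \<Rightarrow> real \<Rightarrow> real \<Rightarrow> real" where
  "Pmn m n p q = (\<Sum>i\<le>m. \<Sum>j\<in>{i..n}.
      binom_pmf m (max p q) i * binom_pmf n (min p q) j)"

definition Pn :: "nat \<Rightarrow> real \<Rightarrow> real \<Rightarrow> real" where
  "Pn n p q = Pmn n n p q"

end

theory Submission
  imports Defs
begin

text \<open>Let \<open>H = (sqrt (a b) + sqrt ((1 - a) (1 - b)))\<^sup>2 \<le> 1\<close> for \<open>a = max p q\<close>, \<open>b = min p q\<close>.
  Optimising the Chernoff bound \<open>P(k,p,q) \<le> E t\<^sup>Y\<^sup>-\<^sup>X\<close> over \<open>t \<ge> 1\<close> gives \<open>P(k,p,q) \<le> H\<^sup>k\<close>,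
  while Cauchy-Schwarz on the diagonal \<open>X = Y\<close> gives \<open>P(n,p,q) \<ge> H\<^sup>n / (n + 1)\<close>.
  So \<open>P(n,p\<^sub>n,q\<^sub>n) = o(1/n)\<close> forces \<open>H\<^sub>n\<^sup>n \<rightarrow> 0\<close>, hence \<open>H\<^sub>n\<^sup>\<alpha>\<^sup>n \<rightarrow> 0\<close>, which bounds
  \<open>P(\<lfloor>\<alpha>n\<rfloor>,p\<^sub>n,q\<^sub>n)\<close>.\<close>

lemma binom_pmf_nonneg: "0 \<le> p \<Longrightarrow> p \<le> 1 \<Longrightarrow> 0 \<le> binom_pmf n p k"
  by (simp add: binom_pmf_def)

lemma sum_binom_pmf_mult_power: "(\<Sum>k\<le>n. binom_pmf n p k * x ^ k) = (p * x + (1 - p)) ^ n"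
  by (simp add: binom_pmf_def binomial_ring[of "p * x" "1 - p" n] power_mult_distrib mult_ac)

lemma Pn_nonneg: "p \<in> {0..1} \<Longrightarrow> q \<in> {0..1} \<Longrightarrow> 0 \<le> Pn n p q"
  by (auto simp: Pn_def Pmn_def intro!: sum_nonneg mult_nonneg_nonneg binom_pmf_nonneg)

definition bernoulli_affinity :: "real \<Rightarrow> real \<Rightarrow> real" where
  "bernoulli_affinity a b = (sqrt (a * b) + sqrt ((1 - a) * (1 - b))) ^ 2"

lemma bernoulli_affinity_eq:
  assumes "a \<in> {0..1}" "b \<in> {0..1}"
  shows "bernoulli_affinity a b = a * b + (1 - a) * (1 - b) + 2 * sqrt (a * (1 - b) * (b * (1 - a)))"
proof -
  have "sqrt (a * b) * sqrt ((1 - a) * (1 - b)) = sqrt (a * (1 - b) * (b * (1 - a)))"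
    by (simp flip: real_sqrt_mult add: mult_ac)
  with assms show ?thesis
    by (simp add: bernoulli_affinity_def power2_sum)
qed

lemma bernoulli_affinity_le_1:
  assumes "a \<in> {0..1}" "b \<in> {0..1}"
  shows "bernoulli_affinity a b \<le> 1"
proof -
  have "sqrt (a * (1 - b) * (b * (1 - a))) \<le> (a * (1 - b) + b * (1 - a)) / 2"
    using assms by (intro arith_geo_mean_sqrt) auto
  then show ?thesis
    using assms by (simp add: bernoulli_affinity_eq algebra_simps)
qed

text \<open>Chernoff bound: weighting the event \<open>i \<le> j\<close> by \<open>t\<^sup>j\<^sup>-\<^sup>i \<ge> 1\<close> makes the sum factor
  into the two generating functions.\<close>
lemma sum_binom_pmf_pairs_le_mgf_product:
  fixes a b t :: real
  assumes "a \<in> {0..1}" "b \<in> {0..1}" "t \<ge> 1"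
  shows "(\<Sum>i\<le>m. \<Sum>j\<in>{i..n}. binom_pmf m a i * binom_pmf n b j)
    \<le> (a * (1 / t) + (1 - a)) ^ m * (b * t + (1 - b)) ^ n"
proof -
  have weight: "1 \<le> (1 / t) ^ i * t ^ j" if "i \<le> j" for i j :: nat
  proof -
    have "t ^ i \<le> t ^ j" using assms that by (intro power_increasing) auto
    then show ?thesis using assms by (simp add: power_one_over field_simps)
  qed
  have "(\<Sum>i\<le>m. \<Sum>j\<in>{i..n}. binom_pmf m a i * binom_pmf n b j)
      \<le> (\<Sum>i\<le>m. \<Sum>j\<in>{i..n}. (binom_pmf m a i * (1 / t) ^ i) * (binom_pmf n b j * t ^ j))"
  proof (intro sum_mono)
    fix i j assume "j \<in> {i..n}"
    then have "binom_pmf m a i * binom_pmf n b j * 1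
        \<le> binom_pmf m a i * binom_pmf n b j * ((1 / t) ^ i * t ^ j)"
      using assms weight[of i j] by (intro mult_left_mono) (auto simp: binom_pmf_nonneg)
    then show "binom_pmf m a i * binom_pmf n b j \<le> (binom_pmf m a i * (1 / t) ^ i) * (binom_pmf n b j * t ^ j)"
      by (simp add: mult_ac)
  qed
  also have "\<dots> \<le> (\<Sum>i\<le>m. \<Sum>j\<le>n. (binom_pmf m a i * (1 / t) ^ i) * (binom_pmf n b j * t ^ j))"
    using assms by (intro sum_mono sum_mono2) (auto simp: binom_pmf_nonneg)
  also have "\<dots> = (a * (1 / t) + (1 - a)) ^ m * (b * t + (1 - b)) ^ n"
    by (simp only: sum_product [symmetric] sum_binom_pmf_mult_power)
  finally show ?thesis .
qed

lemma mgf_product_eq: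
  fixes a b t :: real
  assumes "t \<noteq> 0"
  shows "(a * (1 / t) + (1 - a)) * (b * t + (1 - b))
    = a * b + (1 - a) * (1 - b) + a * (1 - b) / t + b * (1 - a) * t"
  using assms by (simp add: field_simps)

text \<open>The affinity is the infimum over \<open>t \<ge> 1\<close> of the product of generating functions:
  attained at \<open>t = sqrt (a(1-b) / (b(1-a)))\<close>, or approached as \<open>t \<rightarrow> \<infinity>\<close> when \<open>b(1-a) = 0\<close>.\<close>
lemma le_bernoulli_affinity_power:
  fixes a b x :: real
  assumes ab: "0 \<le> b" "b \<le> a" "a \<le> 1"
    and bound: "\<And>t. t \<ge> 1 \<Longrightarrow> x \<le> ((a * (1 / t) + (1 - a)) * (b * t + (1 - b))) ^ k"
  shows "x \<le> bernoulli_affinity a b ^ k"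
proof -
  define c u v where "c = a * b + (1 - a) * (1 - b)" and "u = b * (1 - a)" and "v = a * (1 - b)"
  have "0 \<le> u" using ab by (simp add: u_def)
  have "u \<le> v" using ab by (simp add: u_def v_def algebra_simps)
  have affinity: "bernoulli_affinity a b = c + 2 * sqrt (v * u)"
    using ab by (simp add: bernoulli_affinity_eq c_def u_def v_def)
  have f: "(a * (1 / t) + (1 - a)) * (b * t + (1 - b)) = c + v / t + u * t" if "t \<noteq> 0" for t
    using mgf_product_eq[OF that] by (simp add: c_def u_def v_def)
  show ?thesis
  proof (cases "u = 0")
    case True
    have "((\<lambda>t. (c + v / t) ^ k) \<longlongrightarrow> (c + 0) ^ k) at_top"
      by (intro tendsto_intros tendsto_divide_0[OF tendsto_const]
          filterlim_at_top_imp_at_infinity filterlim_ident)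
    moreover have "eventually (\<lambda>t. x \<le> (c + v / t) ^ k) at_top"
      using eventually_ge_at_top[of "1::real"] by eventually_elim (use bound f True in auto)
    ultimately have "x \<le> c ^ k"
      by (intro tendsto_le[OF _ _ tendsto_const]) auto
    with True affinity show ?thesis by simp
  next
    case False
    then have "u > 0" using \<open>0 \<le> u\<close> by simp
    define t where "t = sqrt v / sqrt u"
    have "t \<ge> 1" using \<open>u > 0\<close> \<open>u \<le> v\<close> by (simp add: t_def)
    have "v / t + u * t = 2 * sqrt (v * u)"
      using \<open>u > 0\<close> \<open>u \<le> v\<close> by (simp add: t_def real_sqrt_mult field_simps flip: power2_eq_square)
    with bound[OF \<open>t \<ge> 1\<close>] f[of t] \<open>t \<ge> 1\<close> affinity show ?thesis by (simp add: add.assoc)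
  qed
qed

lemma Pn_le_bernoulli_affinity_power:
  assumes "p \<in> {0..1}" "q \<in> {0..1}"
  shows "Pn k p q \<le> bernoulli_affinity (max p q) (min p q) ^ k"
proof (rule le_bernoulli_affinity_power)
  fix t :: real assume "t \<ge> 1"
  have "max p q \<in> {0..1}" "min p q \<in> {0..1}" using assms by auto
  from sum_binom_pmf_pairs_le_mgf_product[OF this \<open>t \<ge> 1\<close>, of k k]
  show "Pn k p q \<le> ((max p q * (1 / t) + (1 - max p q)) * (min p q * t + (1 - min p q))) ^ k"
    by (simp add: Pn_def Pmn_def power_mult_distrib)
qed (use assms in auto)

lemma bernoulli_affinity_power_le_Pn:
  assumes "p \<in> {0..1}" "q \<in> {0..1}"
  shows "bernoulli_affinity (max p q) (min p q) ^ n / (n + 1) \<le> Pn n p q"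
proof -
  define a b where "a = max p q" and "b = min p q"
  have ab: "a \<in> {0..1}" "b \<in> {0..1}" using assms by (auto simp: a_def b_def)
  define s r where "s = sqrt (a * b)" and "r = sqrt ((1 - a) * (1 - b))"
  define c where "c i = real (n choose i) * s ^ i * r ^ (n - i)" for i
  have c_sq: "(c i)\<^sup>2 = binom_pmf n a i * binom_pmf n b i" for i
  proof -
    have "(c i)\<^sup>2 = real (n choose i) ^ 2 * (s\<^sup>2) ^ i * (r\<^sup>2) ^ (n - i)"
      by (simp add: c_def power_mult_distrib flip: power_mult) (simp add: mult.commute)
    also have "\<dots> = binom_pmf n a i * binom_pmf n b i"
      using ab by (simp add: s_def r_def binom_pmf_def power_mult_distrib power2_eq_square mult_ac)
    finally show ?thesis .
  qed
  have "(\<Sum>i\<le>n. c i) = (s + r) ^ n"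
    by (simp add: c_def binomial_ring)
  then have "bernoulli_affinity a b ^ n = (\<Sum>i\<le>n. c i)\<^sup>2"
    by (simp add: bernoulli_affinity_def s_def r_def flip: power_mult) (simp add: mult.commute)
  also have "\<dots> \<le> (n + 1) * (\<Sum>i\<le>n. binom_pmf n a i * binom_pmf n b i)"
    using sum_squared_le_sum_of_squares[of c "{..n}"] by (simp add: c_sq mult.commute)
  also have "\<dots> \<le> (n + 1) * Pn n p q"
    unfolding Pn_def Pmn_def a_def [symmetric] b_def [symmetric]
    using ab by (intro mult_left_mono sum_mono member_le_sum) (auto simp: binom_pmf_nonneg)
  finally show ?thesis by (simp add: a_def b_def field_simps)
qed

lemma tendsto_Suc_mult_if_smallo_inverse:
  fixes f :: "nat \<Rightarrow> real"
  assumes "f \<in> o(\<lambda>n. 1 / real n)"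
  shows "(\<lambda>n. (real n + 1) * f n) \<longlonglongrightarrow> 0"
proof -
  have nf: "(\<lambda>n. real n * f n) \<longlonglongrightarrow> 0"
    using smalloD_tendsto[OF assms] by (simp add: mult.commute)
  have "(\<lambda>n. real n * f n * (1 / real n)) \<longlonglongrightarrow> 0 * 0"
    by (intro tendsto_mult nf lim_const_over_n)
  moreover have "eventually (\<lambda>n. real n * f n * (1 / real n) = f n) sequentially"
    using eventually_gt_at_top[of "0::nat"] by eventually_elim simp
  ultimately have "f \<longlonglongrightarrow> 0"
    by (simp add: tendsto_cong)
  with nf have "(\<lambda>n. real n * f n + f n) \<longlonglongrightarrow> 0 + 0"
    by (intro tendsto_add)
  then show ?thesis by (simp add: distrib_right)
qed

lemma tendsto_power_zero_smaller_exponent: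
  fixes x :: "nat \<Rightarrow> real"
  assumes x: "\<And>n. x n \<in> {0..1}" and lim: "(\<lambda>n. x n ^ n) \<longlonglongrightarrow> 0"
    and "k > 0" and exponent: "eventually (\<lambda>n. n \<le> k * m n) sequentially"
  shows "(\<lambda>n. x n ^ m n) \<longlonglongrightarrow> 0"
proof (rule tendsto_sandwich[OF _ _ tendsto_const])
  show "(\<lambda>n. root k (x n ^ n)) \<longlonglongrightarrow> 0"
    using tendsto_real_root[OF lim, of k] by simp
  show "eventually (\<lambda>n. 0 \<le> x n ^ m n) sequentially"
    using x by simp
  show "eventually (\<lambda>n. x n ^ m n \<le> root k (x n ^ n)) sequentially"
    using exponent
  proof eventually_elim
    case (elim n)
    have "(x n ^ m n) ^ k \<le> x n ^ n"
      using x[of n] elim by (simp add: power_decreasing mult.commute flip: power_mult)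
    have "x n ^ m n = root k ((x n ^ m n) ^ k)"
      using \<open>k > 0\<close> x[of n] by (intro real_root_power_cancel [symmetric]) auto
    also have "\<dots> \<le> root k (x n ^ n)"
      using \<open>k > 0\<close> \<open>(x n ^ m n) ^ k \<le> x n ^ n\<close> by simp
    finally show ?case .
  qed
qed

lemma eventually_le_mult_nat_floor:
  fixes \<alpha> :: real
  assumes "\<alpha> > 0"
  obtains k :: nat where "k > 0" "eventually (\<lambda>n. n \<le> k * nat \<lfloor>\<alpha> * real n\<rfloor>) sequentially"
proof -
  obtain k :: nat where k: "2 / \<alpha> \<le> real k"
    using real_arch_simple by blast
  then have "k > 0" "2 \<le> real k * \<alpha>"
    using assms by (auto simp: field_simps intro: ccontr)
  have "n \<le> k * nat \<lfloor>\<alpha> * real n\<rfloor>" if "n \<ge> k" for n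
  proof -
    have "real k * (\<alpha> * real n - 1) \<le> real k * real (nat \<lfloor>\<alpha> * real n\<rfloor>)"
      by (intro mult_left_mono) linarith+
    moreover have "2 * real n \<le> real k * \<alpha> * real n"
      using \<open>2 \<le> real k * \<alpha>\<close> by (intro mult_right_mono) auto
    ultimately have "real n \<le> real (k * nat \<lfloor>\<alpha> * real n\<rfloor>)"
      using that by (simp add: algebra_simps)
    then show ?thesis by linarith
  qed
  with \<open>k > 0\<close> show ?thesis
    by (intro that[of k]) (auto simp: eventually_at_top_linorder)
qed

theorem lemma4p4:
  fixes p q :: "nat \<Rightarrow> real" and \<alpha> :: real
  assumes "\<And>n. p n \<in> {0..1}" and "\<And>n. q n \<in> {0..1}"
    and "(\<lambda>n. Pn n (p n) (q n)) \<in> o(\<lambda>n. 1 / real n)"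
    and "\<alpha> > 0"
  shows "(\<lambda>n. Pn (nat \<lfloor>\<alpha> * real n\<rfloor>) (p n) (q n)) \<longlonglongrightarrow> 0"
proof -
  define H where "H n = bernoulli_affinity (max (p n) (q n)) (min (p n) (q n))" for n
  have H: "H n \<in> {0..1}" for n
    using assms(1,2)[of n] bernoulli_affinity_le_1[of "max (p n) (q n)" "min (p n) (q n)"]
    by (auto simp: H_def bernoulli_affinity_def)
  have "(\<lambda>n. H n ^ n) \<longlonglongrightarrow> 0"
  proof (rule tendsto_sandwich[OF _ _ tendsto_const tendsto_Suc_mult_if_smallo_inverse[OF assms(3)]])
    show "eventually (\<lambda>n. 0 \<le> H n ^ n) sequentially"
      using H by simp
    show "eventually (\<lambda>n. H n ^ n \<le> (real n + 1) * Pn n (p n) (q n)) sequentially"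
      using bernoulli_affinity_power_le_Pn[OF assms(1,2)] by (simp add: H_def field_simps)
  qed
  moreover obtain k where "k > 0" "eventually (\<lambda>n. n \<le> k * nat \<lfloor>\<alpha> * real n\<rfloor>) sequentially"
    using eventually_le_mult_nat_floor[OF assms(4)] .
  ultimately have lim: "(\<lambda>n. H n ^ nat \<lfloor>\<alpha> * real n\<rfloor>) \<longlonglongrightarrow> 0"
    by (rule tendsto_power_zero_smaller_exponent[OF H])
  show ?thesis
  proof (rule tendsto_sandwich[OF _ _ tendsto_const lim])
    show "eventually (\<lambda>n. 0 \<le> Pn (nat \<lfloor>\<alpha> * real n\<rfloor>) (p n) (q n)) sequentially"
      using assms(1,2) by (simp add: Pn_nonneg)
    show "eventually (\<lambda>n. Pn (nat \<lfloor>\<alpha> * real n\<rfloor>) (p n) (q n) \<le> H n ^ nat \<lfloor>\<alpha> * real n\<rfloor>) sequentially"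
      using assms(1,2) by (simp add: H_def Pn_le_bernoulli_affinity_power)
  qed
qed

end
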